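(* The family $R^{\mathrm{co}}_\lambda$, $\lambda>0$, defined by \[ R^{\mathrm{co}}_\lambda f=R^{\mathrm{du}}_\lambda f+\sum_{i\in\mathcal M}\sum_{j=1}^{\kappa(i)}u_{i,j}(f,\lambda)\,\ell^{i,j}_\lambda \] is a Feller resolvent on $C(S_{\mathrm u})$ (it satisfies the Hilbert equation, $\lambda R^{\mathrm{co}}_\lambda f\to f$ as $\lambda\to\infty$, the operators are non-negative and $\lambda R^{\mathrm{co}}_\lambda1_{S_{\mathrm u}}\le1_{S_{\mathrm u}}$). It is conservative (i.e. $\lambda R^{\mathrm{co}}_\lambda1_{S_{\mathrm u}}=1_{S_{\mathrm u}}$) if all $\mathfrak p_{i,j}$ are probability measures.
   Context: Let $S_1,\dots,S_N$ be disjoint compact metrizable separable spaces and $A_i$ generators of Feller semigroups (positive contraction semigroups, not necessarily conservative) on $C(S_i)$ with resolvents $R_{\lambda,i}=(\lambda-A_i)^{-1}$. Assume $A_1,\dots,A_M$ ($1\le M\le N$) are not conservative and $A_{M+1},\dots,A_N$ conservative. For $i\in\mathcal M=\{1,\dots,M\}$, assume the kernel of $A_i$ is trivial and there are continuous functions $\phi^{i,j}$, $j=1,\dots,\kappa(i)$, with $0\le\phi^{i,j}\le1_{S_i}$, $\lambda R_{\lambda,i}\phi^{i,j}\le\phi^{i,j}$ for all $\lambda>0$, $\lambda R_{\lambda,i}\phi^{i,j}\ne\phi^{i,j}$, and $\sum_{j=1}^{\kappa(i)}\phi^{i,j}=1_{S_i}$ (a regular Feller exit boundary with $\kappa(i)$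 exits). Let $\ell^{i,j}_\lambda=\phi^{i,j}-\lambda R_{\lambda,i}\phi^{i,j}$ (Laplace transforms of exit laws), $\mathcal{IJ}=\{(i,j):i\in\mathcal M,1\le j\le\kappa(i)\}$, $\kappa=\sum_{i\in\mathcal M}\kappa(i)$. Let $S_{\mathrm u}$ be the disjoint union of the $S_i$ (functions on $S_i$ extended by zero to $S_{\mathrm u}$; $f_i=f1_{S_i}$), $R^{\mathrm{du}}_\lambda f=\sum_{i=1}^NR_{\lambda,i}f_i$, and $\mathfrak p_{i,j}$, $(i,j)\in\mathcal{IJ}$, Borel sub-probability measures on $S_{\mathrm u}$ (distribution of the restart point after exiting $S_i$ through gate $j$). Let $N_\lambda:\mathbb R^\kappa\to\mathbb R^\kappa$, $(N_\lambda w)_{i,j}=\sum_{k\in\mathcal M}\sum_{l=1}^{\kappa(k)}w_{k,l}\int_{S_k}\ell^{k,l}_\lambda\,\mathrm d\mathfrak p_{i,j}$; then $\|N_\lambda\|<1$ and $M_\lambda=I-N_\lambda$ is invertible. For $f\in C(S_{\mathrm u})$, $u(f,\lambda)=M_\lambda^{-1}\big(\int_{S_{\mathrm u}}R^{\mathrm{du}}_\lambda f\,\mathrm d\mathfrak p_{i,j}\big)_{(i,j)\in\mathcal{IJ}}$. *)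

theory Defs
  imports "HOL-Probability.Probability"
begin

text \<open>C(S): real continuous functions on S, extended by zero outside S.\<close>
definition CS :: "'a::topological_space set \<Rightarrow> ('a \<Rightarrow> real) set" where
  "CS S = {f. continuous_on S f \<and> (\<forall>x. x \<notin> S \<longrightarrow> f x = 0)}"

definition feller_resolvent ::
  "'a::topological_space set \<Rightarrow> (real \<Rightarrow> ('a \<Rightarrow> real) \<Rightarrow> ('a \<Rightarrow> real)) \<Rightarrow> bool" where
  "feller_resolvent S R \<longleftrightarrow>
     (\<forall>l>0. \<forall>f\<in>CS S. R l f \<in> CS S) \<and>
     (\<forall>l>0. \<forall>f\<in>CS S. \<forall>g\<in>CS S. \<forall>a b::real.
        R l (\<lambda>x. a * f x + b * g x) = (\<lambda>x. a * R l f x + b * R l g x)) \<and>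
     (\<forall>l>0. \<forall>m>0. \<forall>f\<in>CS S. \<forall>x. R l f x - R m f x = (m - l) * R l (R m f) x) \<and>
     (\<forall>f\<in>CS S. uniform_limit S (\<lambda>l x. l * R l f x) f at_top) \<and>
     (\<forall>l>0. \<forall>f\<in>CS S. (\<forall>x\<in>S. 0 \<le> f x) \<longrightarrow> (\<forall>x\<in>S. 0 \<le> R l f x)) \<and>
     (\<forall>l>0. \<forall>x\<in>S. l * R l (indicator S) x \<le> 1)"

definition conservative_resolvent ::
  "'a::topological_space set \<Rightarrow> (real \<Rightarrow> ('a \<Rightarrow> real) \<Rightarrow> ('a \<Rightarrow> real)) \<Rightarrow> bool" where
  "conservative_resolvent S R \<longleftrightarrow> (\<forall>l>0. \<forall>x\<in>S. l * R l (indicator S) x = 1)"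

text \<open>The generator A of a resolvent: A f = g iff f = R_lam (lam f - g) for all lam > 0
  (i.e. A = lam - R_lam^{-1} on D(A) = range R_lam).\<close>
definition resolvent_generator ::
  "'a::topological_space set \<Rightarrow> (real \<Rightarrow> ('a \<Rightarrow> real) \<Rightarrow> ('a \<Rightarrow> real))
     \<Rightarrow> ('a \<Rightarrow> real) \<Rightarrow> ('a \<Rightarrow> real) \<Rightarrow> bool" where
  "resolvent_generator S R f g \<longleftrightarrow> f \<in> CS S \<and> g \<in> CS S \<and>
     (\<forall>l>0. f = R l (\<lambda>x. l * f x - g x))"

text \<open>Laplace transform of the exit law: ell_lam = phi - lam R_lam phi.\<close>
definition exit_ell :: "(real \<Rightarrow> ('a \<Rightarrow> real) \<Rightarrow> ('a \<Rightarrow> real)) \<Rightarrow> ('a \<Rightarrow> real) \<Rightarrow> real \<Rightarrow> 'a \<Rightarrow> real" where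
  "exit_ell R \<phi> l x = \<phi> x - l * R l \<phi> x"

definition idx_IJ :: "nat \<Rightarrow> (nat \<Rightarrow> nat) \<Rightarrow> (nat \<times> nat) set" where
  "idx_IJ M \<kappa> = {(i, j). i \<in> {1..M} \<and> j \<in> {1..\<kappa> i}}"

text \<open>Entries of the matrix N_lam: (N_lam w)_q = sum_r N_mat q r * w_r.\<close>
definition N_mat ::
  "(nat \<Rightarrow> 'a::topological_space set) \<Rightarrow> (nat \<Rightarrow> real \<Rightarrow> ('a \<Rightarrow> real) \<Rightarrow> ('a \<Rightarrow> real))
   \<Rightarrow> (nat \<Rightarrow> nat \<Rightarrow> 'a \<Rightarrow> real) \<Rightarrow> (nat \<times> nat \<Rightarrow> 'a measure) \<Rightarrow> real
   \<Rightarrow> nat \<times> nat \<Rightarrow> nat \<times> nat \<Rightarrow> real" where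
  "N_mat S R \<phi> p l q r =
     set_lebesgue_integral (p q) (S (fst r)) (exit_ell (R (fst r)) (\<phi> (fst r) (snd r)) l)"

definition S_union :: "nat \<Rightarrow> (nat \<Rightarrow> 'a set) \<Rightarrow> 'a set" where
  "S_union Nn S = (\<Union>i\<in>{1..Nn}. S i)"

definition R_du ::
  "nat \<Rightarrow> (nat \<Rightarrow> 'a set) \<Rightarrow> (nat \<Rightarrow> real \<Rightarrow> ('a \<Rightarrow> real) \<Rightarrow> ('a \<Rightarrow> real))
   \<Rightarrow> real \<Rightarrow> ('a \<Rightarrow> real) \<Rightarrow> 'a \<Rightarrow> real" where
  "R_du Nn S R l f = (\<lambda>x. \<Sum>i\<in>{1..Nn}. R i l (\<lambda>y. f y * indicator (S i) y) x)"

text \<open>u(f,lam) = M_lam^{-1} b, i.e. the unique vector w on IJ with (I - N_lam) w = b,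
  where b_q = integral of R^du_lam f w.r.t. p_q.\<close>
definition u_coef ::
  "nat \<Rightarrow> nat \<Rightarrow> (nat \<Rightarrow> nat) \<Rightarrow> (nat \<Rightarrow> 'a::topological_space set)
   \<Rightarrow> (nat \<Rightarrow> real \<Rightarrow> ('a \<Rightarrow> real) \<Rightarrow> ('a \<Rightarrow> real))
   \<Rightarrow> (nat \<Rightarrow> nat \<Rightarrow> 'a \<Rightarrow> real) \<Rightarrow> (nat \<times> nat \<Rightarrow> 'a measure) \<Rightarrow> real
   \<Rightarrow> ('a \<Rightarrow> real) \<Rightarrow> nat \<times> nat \<Rightarrow> real" where
  "u_coef Nn M \<kappa> S R \<phi> p l f =
     (THE w. (\<forall>q. q \<notin> idx_IJ M \<kappa> \<longrightarrow> w q = 0) \<and>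
        (\<forall>q\<in>idx_IJ M \<kappa>.
           w q - (\<Sum>r\<in>idx_IJ M \<kappa>. N_mat S R \<phi> p l q r * w r)
             = integral\<^sup>L (p q) (R_du Nn S R l f)))"

definition R_co ::
  "nat \<Rightarrow> nat \<Rightarrow> (nat \<Rightarrow> nat) \<Rightarrow> (nat \<Rightarrow> 'a::topological_space set)
   \<Rightarrow> (nat \<Rightarrow> real \<Rightarrow> ('a \<Rightarrow> real) \<Rightarrow> ('a \<Rightarrow> real))
   \<Rightarrow> (nat \<Rightarrow> nat \<Rightarrow> 'a \<Rightarrow> real) \<Rightarrow> (nat \<times> nat \<Rightarrow> 'a measure)
   \<Rightarrow> real \<Rightarrow> ('a \<Rightarrow> real) \<Rightarrow> 'a \<Rightarrow> real" where
  "R_co Nn M \<kappa> S R \<phi> p l f =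
     (\<lambda>x. R_du Nn S R l f x +
        (\<Sum>q\<in>idx_IJ M \<kappa>. u_coef Nn M \<kappa> S R \<phi> p l f q * exit_ell (R (fst q)) (\<phi> (fst q) (snd q)) l x))"

end

theory Submission
  imports Defs
begin

text \<open>
  Write R_co l f = R_du l f + (sum over the exits q of u q (f, l) * ell q l), where u (f, l)
  solves (I - N l) u = b. Each exit law satisfies the resolvent identity
  ell q m + (m - l) R l (ell q m) = ell q l, and together the exit laws carry exactly the mass
  lost by the disjoint union: their sum is 1 - l R_du l 1. As R_du l 1 > 0 on the compact union,
  the row sums of N l are bounded by some c < 1, so u is well defined, linear and positive.
  By uniqueness of u the Hilbert equation reduces to u (f, l) = u (f, m) + (m - l) u (R_co m f, l).
  The vector 1/l - u (1, l) solves the system with right-hand side (1 - p q (S_u)) / l >= 0,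
  which gives l R_co l 1 <= 1, with equality when all p q are probability measures. Strong
  continuity holds because l u (f, l) stays bounded while each ell q l tends to 0 uniformly.

  The proof does not use the trivial kernels, the non-conservativity of A_1, ..., A_M, the bound
  phi <= 1 or l R phi /= phi.
\<close>

lemma sum_eq_single: "finite I \<Longrightarrow> i \<in> I \<Longrightarrow> (\<And>k. k \<in> I \<Longrightarrow> k \<noteq> i \<Longrightarrow> g k = 0) \<Longrightarrow> sum g I = g i"
  using sum.mono_neutral_left[of I "{i}" g] by auto

lemma uniform_limit_sum:
  fixes f :: "'i \<Rightarrow> 'n \<Rightarrow> 'x \<Rightarrow> real"
  assumes "finite I" "\<And>i. i \<in> I \<Longrightarrow> uniform_limit X (f i) (g i) F"
  shows "uniform_limit X (\<lambda>n x. \<Sum>i\<in>I. f i n x) (\<lambda>x. \<Sum>i\<in>I. g i x) F"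
  using assms
proof (induction I rule: finite_induct)
  case empty
  then show ?case
    by (simp add: uniform_limit_const)
next
  case (insert i I)
  then have "uniform_limit X (\<lambda>n x. f i n x + (\<Sum>i\<in>I. f i n x)) (\<lambda>x. g i x + (\<Sum>i\<in>I. g i x)) F"
    by (intro uniform_limit_add) auto
  then show ?case
    using insert by simp
qed

lemma uniform_limit_bounded_mult_null:
  fixes c :: "'n \<Rightarrow> real"
  assumes c: "\<forall>\<^sub>F n in F. \<bar>c n\<bar> \<le> K" and g: "uniform_limit X g (\<lambda>x. 0) F"
  shows "uniform_limit X (\<lambda>n x. c n * g n x) (\<lambda>x. 0) F"
proof (rule uniform_limitI)
  fix e :: real
  assume "e > 0"
  then have "e / (\<bar>K\<bar> + 1) > 0"
    by simp
  from c uniform_limitD[OF g this]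
  show "\<forall>\<^sub>F n in F. \<forall>x\<in>X. dist (c n * g n x) 0 < e"
  proof eventually_elim
    case (elim n)
    show ?case
    proof
      fix x
      assume "x \<in> X"
      then have "(\<bar>K\<bar> + 1) * \<bar>g n x\<bar> < e"
        using elim(2) by (simp add: dist_real_def pos_less_divide_eq mult.commute)
      moreover have "\<bar>c n\<bar> \<le> \<bar>K\<bar> + 1"
        using elim(1) by linarith
      then have "\<bar>c n * g n x\<bar> \<le> (\<bar>K\<bar> + 1) * \<bar>g n x\<bar>"
        by (simp add: abs_mult mult_right_mono)
      ultimately show "dist (c n * g n x) 0 < e"
        by simp
    qed
  qed
qed

section \<open>Continuous functions vanishing outside a set\<close>

lemma CS_zero [simp]: "(\<lambda>x. 0) \<in> CS S"
  by (simp add: CS_def)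

lemma CS_indicator [simp]: "indicator S \<in> CS S"
  unfolding CS_def using continuous_on_cong[of S S "indicator S" "\<lambda>_. 1 :: real"]
  by auto

lemma CS_vanishes: "f \<in> CS S \<Longrightarrow> x \<notin> S \<Longrightarrow> f x = 0"
  by (simp add: CS_def)

lemma CS_continuous_on: "f \<in> CS S \<Longrightarrow> continuous_on S f"
  by (simp add: CS_def)

lemma CS_lincomb: "f \<in> CS S \<Longrightarrow> g \<in> CS S \<Longrightarrow> (\<lambda>x. a * f x + b * g x) \<in> CS S"
  unfolding CS_def by (auto intro!: continuous_intros)

lemma CS_scale: "f \<in> CS S \<Longrightarrow> (\<lambda>x. c * f x) \<in> CS S"
  unfolding CS_def by (auto intro!: continuous_intros)

lemma CS_sum: "finite Q \<Longrightarrow> (\<And>q. q \<in> Q \<Longrightarrow> h q \<in> CS S) \<Longrightarrow> (\<lambda>x. \<Sum>q\<in>Q. h q x) \<in> CS S"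
  unfolding CS_def by (auto intro!: continuous_intros)

lemma CS_restrict:
  assumes "f \<in> CS T" "S \<subseteq> T"
  shows "(\<lambda>x. f x * indicator S x) \<in> CS S"
proof -
  have "continuous_on S f"
    using assms by (auto simp: CS_def intro: continuous_on_subset)
  then show ?thesis
    unfolding CS_def by (auto cong: continuous_on_cong)
qed

lemma CS_extend:
  assumes f: "f \<in> CS S" and "S \<subseteq> T" "closed S" "closed (T - S)"
  shows "f \<in> CS T"
proof -
  have "continuous_on (T - S) f"
    using f continuous_on_cong[of "T - S" "T - S" f "\<lambda>_. 0"] by (simp add: CS_def)
  then have "continuous_on (S \<union> (T - S)) f"
    using assms by (intro continuous_on_closed_Un) (auto simp: CS_def)
  moreover have "S \<union> (T - S) = T"
    using assms by blast
  ultimately show ?thesis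
    using assms by (auto simp: CS_def)
qed

lemma CS_bounded:
  assumes "compact S" "f \<in> CS S"
  shows "\<exists>K\<ge>0. \<forall>x. \<bar>f x\<bar> \<le> K"
proof -
  have "bounded (f ` S)"
    using assms by (intro compact_imp_bounded compact_continuous_image) (auto simp: CS_def)
  then obtain K where K: "\<forall>x\<in>S. \<bar>f x\<bar> \<le> K"
    by (auto simp: bounded_iff)
  have "\<bar>f x\<bar> \<le> max K 0" for x
    using K assms(2) by (cases "x \<in> S") (auto simp: CS_def)
  then show ?thesis
    by (intro exI[of _ "max K 0"]) auto
qed

lemma integrable_CS:
  assumes "finite_measure M" "sets M = sets (restrict_space borel S)" "compact S" "f \<in> CS S"
  shows "integrable M f"
proof -
  obtain K where "\<forall>x. \<bar>f x\<bar> \<le> K"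
    using CS_bounded assms(3,4) by blast
  moreover have "f \<in> borel_measurable M"
    using borel_measurable_continuous_on_restrict[OF CS_continuous_on[OF assms(4)]]
      measurable_cong_sets[OF assms(2) refl] by blast
  ultimately show ?thesis
    by (intro finite_measure.integrable_const_bound[OF assms(1), of _ K]) auto
qed

section \<open>Feller resolvents\<close>

locale feller =
  fixes S :: "'a::topological_space set" and R :: "real \<Rightarrow> ('a \<Rightarrow> real) \<Rightarrow> 'a \<Rightarrow> real"
  assumes feller_resolvent: "feller_resolvent S R"
begin

lemma R_CS: "l > 0 \<Longrightarrow> f \<in> CS S \<Longrightarrow> R l f \<in> CS S"
  using feller_resolvent by (simp add: feller_resolvent_def)

lemma R_lincomb:
  "l > 0 \<Longrightarrow> f \<in> CS S \<Longrightarrow> g \<in> CS S \<Longrightarrow>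
    R l (\<lambda>x. a * f x + b * g x) = (\<lambda>x. a * R l f x + b * R l g x)"
  using feller_resolvent by (simp add: feller_resolvent_def)

lemma resolvent_eq:
  "l > 0 \<Longrightarrow> m > 0 \<Longrightarrow> f \<in> CS S \<Longrightarrow> R l f x - R m f x = (m - l) * R l (R m f) x"
  using feller_resolvent by (simp add: feller_resolvent_def)

lemma R_nonneg:
  "l > 0 \<Longrightarrow> f \<in> CS S \<Longrightarrow> (\<And>x. x \<in> S \<Longrightarrow> 0 \<le> f x) \<Longrightarrow> 0 \<le> R l f x"
  using feller_resolvent R_CS[of l f] by (cases "x \<in> S") (auto simp: feller_resolvent_def CS_def)

lemma R_indicator_le: "l > 0 \<Longrightarrow> x \<in> S \<Longrightarrow> l * R l (indicator S) x \<le> 1"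
  using feller_resolvent by (simp add: feller_resolvent_def)

lemma R_vanishes: "l > 0 \<Longrightarrow> f \<in> CS S \<Longrightarrow> x \<notin> S \<Longrightarrow> R l f x = 0"
  using R_CS CS_vanishes by blast

lemma uniform_limit_R: "f \<in> CS S \<Longrightarrow> uniform_limit UNIV (\<lambda>l x. l * R l f x) f at_top"
proof (rule uniform_limitI)
  fix e :: real
  assume f: "f \<in> CS S" and "e > 0"
  then have "\<forall>\<^sub>F l in at_top. \<forall>x\<in>S. dist (l * R l f x) (f x) < e"
    using feller_resolvent by (auto simp: feller_resolvent_def intro: uniform_limitD)
  with eventually_gt_at_top[of 0]
  show "\<forall>\<^sub>F l in at_top. \<forall>x\<in>UNIV. dist (l * R l f x) (f x) < e"
  proof eventually_elim
    case (elim l)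
    show ?case
    proof
      fix x
      show "dist (l * R l f x) (f x) < e"
        using elim R_vanishes[OF _ f, of l x] CS_vanishes[OF f, of x] \<open>e > 0\<close>
        by (cases "x \<in> S") auto
    qed
  qed
qed

lemma R_zero: "l > 0 \<Longrightarrow> R l (\<lambda>x. 0) = (\<lambda>x. 0)"
  using R_lincomb[of l "\<lambda>x. 0" "\<lambda>x. 0" 0 0] by simp

lemma R_sum:
  assumes "l > 0" "finite Q" "\<And>q. q \<in> Q \<Longrightarrow> h q \<in> CS S"
  shows "R l (\<lambda>x. \<Sum>q\<in>Q. c q * h q x) = (\<lambda>x. \<Sum>q\<in>Q. c q * R l (h q) x)"
  using assms(2,3)
proof (induction Q rule: finite_induct)
  case empty
  then show ?case
    using R_zero[OF assms(1)] by simp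
next
  case (insert q Q)
  then have "R l (\<lambda>x. c q * h q x + 1 * (\<Sum>q\<in>Q. c q * h q x)) =
      (\<lambda>x. c q * R l (h q) x + 1 * R l (\<lambda>x. \<Sum>q\<in>Q. c q * h q x) x)"
    using assms(1) by (intro R_lincomb CS_sum CS_scale) auto
  then show ?case
    using insert by simp
qed

lemma R_indicator_antimono:
  assumes "0 < l" "l \<le> m"
  shows "R m (indicator S) x \<le> R l (indicator S) x"
proof -
  have "0 \<le> (m - l) * R l (R m (indicator S)) x"
    using assms by (intro mult_nonneg_nonneg R_nonneg R_CS) auto
  then show ?thesis
    using resolvent_eq[of l m "indicator S" x] assms by simp
qed

lemma R_indicator_pos:
  assumes "l > 0" "x \<in> S"
  shows "0 < R l (indicator S) x"
proof -
  have "\<forall>\<^sub>F m in at_top. \<forall>y\<in>UNIV. dist (m * R m (indicator S) y) (indicator S y) < 1/2"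
    by (rule uniform_limitD[OF uniform_limit_R[OF CS_indicator]]) simp
  then have "\<forall>\<^sub>F m in at_top. dist (m * R m (indicator S) x) 1 < 1/2"
    by (rule eventually_mono) (metis UNIV_I assms(2) indicator_simps(1))
  with eventually_ge_at_top[of l]
  have "\<forall>\<^sub>F m in at_top. l \<le> m \<and> 1/2 < m * R m (indicator S) x"
    by eventually_elim (unfold dist_real_def abs_diff_less_iff, simp)
  then obtain m where m: "l \<le> m" "1/2 < m * R m (indicator S) x"
    unfolding eventually_at_top_linorder by (meson order_refl)
  then have "0 < m * R m (indicator S) x"
    by linarith
  then have "0 < R m (indicator S) x"
    using assms(1) m(1) by (simp add: zero_less_mult_iff)
  then show ?thesis
    using R_indicator_antimono[OF assms(1) m(1), of x] by linarith
qed

lemma R_indicator_conservative: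
  assumes "conservative_resolvent S R" "l > 0"
  shows "l * R l (indicator S) x = indicator S x"
  using assms R_vanishes[of l "indicator S" x]
  by (cases "x \<in> S") (auto simp: conservative_resolvent_def)

lemma exit_ell_CS: "l > 0 \<Longrightarrow> \<phi> \<in> CS S \<Longrightarrow> exit_ell R \<phi> l \<in> CS S"
  using CS_lincomb[of \<phi> S "R l \<phi>" 1 "- l"] R_CS by (simp add: exit_ell_def[abs_def])

lemma exit_ell_nonneg:
  assumes "l > 0" "\<phi> \<in> CS S" "\<And>x. x \<in> S \<Longrightarrow> l * R l \<phi> x \<le> \<phi> x"
  shows "0 \<le> exit_ell R \<phi> l x"
  using assms CS_vanishes[OF exit_ell_CS[OF assms(1,2)], of x]
  by (cases "x \<in> S") (auto simp: exit_ell_def)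

lemma exit_ell_resolvent_eq:
  assumes "l > 0" "m > 0" "\<phi> \<in> CS S"
  shows "exit_ell R \<phi> m x + (m - l) * R l (exit_ell R \<phi> m) x = exit_ell R \<phi> l x"
proof -
  have "R l (exit_ell R \<phi> m) = R l (\<lambda>x. 1 * \<phi> x + (- m) * R m \<phi> x)"
    by (simp add: exit_ell_def[abs_def])
  also have "\<dots> = (\<lambda>x. R l \<phi> x - m * R l (R m \<phi>) x)"
    using assms by (subst R_lincomb) (auto intro: R_CS)
  moreover have "m * (R l \<phi> x - R m \<phi> x) = m * ((m - l) * R l (R m \<phi>) x)"
    using resolvent_eq[OF assms, of x] by simp
  ultimately show ?thesis
    by (simp add: exit_ell_def algebra_simps)
qed

lemma uniform_limit_exit_ell:
  assumes "\<phi> \<in> CS S"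
  shows "uniform_limit UNIV (exit_ell R \<phi>) (\<lambda>x. 0) at_top"
  using uniform_limit_minus[OF uniform_limit_const[where S=UNIV and c=\<phi>] uniform_limit_R[OF assms]]
  by (simp add: exit_ell_def[abs_def])

end

section \<open>Strictly substochastic linear systems\<close>

definition lin_solution :: "'b set \<Rightarrow> ('b \<Rightarrow> 'b \<Rightarrow> real) \<Rightarrow> ('b \<Rightarrow> real) \<Rightarrow> ('b \<Rightarrow> real) \<Rightarrow> bool" where
  "lin_solution J A b w \<longleftrightarrow>
     (\<forall>q. q \<notin> J \<longrightarrow> w q = 0) \<and> (\<forall>q\<in>J. w q - (\<Sum>r\<in>J. A q r * w r) = b q)"

lemma lin_solution_eq: "lin_solution J A b w \<Longrightarrow> q \<in> J \<Longrightarrow> w q - (\<Sum>r\<in>J. A q r * w r) = b q"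
  by (simp add: lin_solution_def)

lemma lin_solution_outside: "lin_solution J A b w \<Longrightarrow> q \<notin> J \<Longrightarrow> w q = 0"
  by (simp add: lin_solution_def)

lemma lin_solution_lincomb:
  assumes "lin_solution J A b w" "lin_solution J A b' w'"
  shows "lin_solution J A (\<lambda>q. a * b q + c * b' q) (\<lambda>q. a * w q + c * w' q)"
proof -
  have "a * w q + c * w' q - (\<Sum>r\<in>J. A q r * (a * w r + c * w' r))
      = a * (w q - (\<Sum>r\<in>J. A q r * w r)) + c * (w' q - (\<Sum>r\<in>J. A q r * w' r))" for q
    by (simp add: algebra_simps sum.distrib sum_distrib_left)
  then show ?thesis
    using assms by (simp add: lin_solution_def)
qed

lemma lin_solution_scale: "lin_solution J A b w \<Longrightarrow> lin_solution J A (\<lambda>q. a * b q) (\<lambda>q. a * w q)"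
  using lin_solution_lincomb[of J A b w b w a 0] by simp

lemma lin_solution_change_matrix:
  assumes "lin_solution J A b w"
  shows "lin_solution J A' (\<lambda>q. b q + (\<Sum>r\<in>J. (A q r - A' q r) * w r)) w"
  unfolding lin_solution_def
proof (intro conjI ballI allI impI)
  fix q
  assume "q \<in> J"
  then have "w q - (\<Sum>r\<in>J. A q r * w r) = b q"
    by (rule lin_solution_eq[OF assms])
  then show "w q - (\<Sum>r\<in>J. A' q r * w r) = b q + (\<Sum>r\<in>J. (A q r - A' q r) * w r)"
    by (simp add: left_diff_distrib sum_subtractf)
qed (use lin_solution_outside[OF assms] in simp)

lemma lin_solution_cong: "lin_solution J A b w \<Longrightarrow> (\<And>q. q \<in> J \<Longrightarrow> b q = b' q) \<Longrightarrow> lin_solution J A b' w"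
  by (simp add: lin_solution_def)

lemma lin_solution_const: "lin_solution J A (\<lambda>q. a - a * (\<Sum>r\<in>J. A q r)) (\<lambda>q. a * indicator J q)"
  by (simp add: lin_solution_def sum_distrib_left algebra_simps)

locale strictly_substochastic =
  fixes J :: "'b set" and A :: "'b \<Rightarrow> 'b \<Rightarrow> real" and c :: real
  assumes finite_J: "finite J"
    and nonneg: "\<And>q r. q \<in> J \<Longrightarrow> r \<in> J \<Longrightarrow> 0 \<le> A q r"
    and row_sum_le: "\<And>q. q \<in> J \<Longrightarrow> (\<Sum>r\<in>J. A q r) \<le> c"
    and c_less_1: "c < 1"
begin

lemma abs_row_sum_le:
  assumes q: "q \<in> J" and w: "\<And>r. r \<in> J \<Longrightarrow> \<bar>w r\<bar> \<le> m"
  shows "\<bar>\<Sum>r\<in>J. A q r * w r\<bar> \<le> c * m"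
proof -
  have "0 \<le> m"
    using w[OF q] by linarith
  have "\<bar>\<Sum>r\<in>J. A q r * w r\<bar> \<le> (\<Sum>r\<in>J. \<bar>A q r * w r\<bar>)"
    by (rule sum_abs)
  also have "\<dots> \<le> (\<Sum>r\<in>J. A q r * m)"
    using nonneg[OF q] w by (intro sum_mono) (simp add: abs_mult mult_left_mono)
  also have "\<dots> = (\<Sum>r\<in>J. A q r) * m"
    by (simp add: sum_distrib_right)
  also have "\<dots> \<le> c * m"
    using row_sum_le[OF q] \<open>0 \<le> m\<close> by (rule mult_right_mono)
  finally show ?thesis .
qed

lemma lin_solution_bound:
  assumes w: "lin_solution J A b w" and b: "\<And>q. q \<in> J \<Longrightarrow> \<bar>b q\<bar> \<le> B" and q: "q \<in> J"
  shows "\<bar>w q\<bar> \<le> B / (1 - c)"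
proof -
  define m where "m = Max ((\<lambda>r. \<bar>w r\<bar>) ` J)"
  have m_ge: "\<bar>w r\<bar> \<le> m" if "r \<in> J" for r
    unfolding m_def using finite_J that by simp
  have "m \<in> (\<lambda>r. \<bar>w r\<bar>) ` J"
    unfolding m_def using finite_J q by (intro Max_in) auto
  then obtain q0 where q0: "q0 \<in> J" "m = \<bar>w q0\<bar>"
    by auto
  have "m = \<bar>b q0 + (\<Sum>r\<in>J. A q0 r * w r)\<bar>"
    using w q0 by (simp add: lin_solution_def algebra_simps)
  also have "\<dots> \<le> B + c * m"
    using abs_triangle_ineq b[OF q0(1)] abs_row_sum_le[OF q0(1) m_ge] by fastforce
  finally have "m \<le> B / (1 - c)"
    using c_less_1 by (simp add: pos_le_divide_eq algebra_simps)
  then show ?thesis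
    using m_ge[OF q] by linarith
qed

lemma lin_solution_nonneg:
  assumes w: "lin_solution J A b w" and b: "\<And>q. q \<in> J \<Longrightarrow> 0 \<le> b q"
  shows "0 \<le> w q"
proof (rule ccontr)
  assume "\<not> 0 \<le> w q"
  then have "q \<in> J"
    using w by (auto simp: lin_solution_def)
  define m where "m = Min (w ` J)"
  have m_le: "m \<le> w r" if "r \<in> J" for r
    unfolding m_def using finite_J that by simp
  have "m \<in> w ` J"
    unfolding m_def using finite_J \<open>q \<in> J\<close> by (intro Min_in) auto
  then obtain q0 where q0: "q0 \<in> J" "m = w q0"
    by auto
  have "m < 0"
    using m_le[OF \<open>q \<in> J\<close>] \<open>\<not> 0 \<le> w q\<close> by linarith
  have "(\<Sum>r\<in>J. A q0 r) * m \<le> (\<Sum>r\<in>J. A q0 r * w r)"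
    unfolding sum_distrib_right using nonneg[OF q0(1)] m_le
    by (intro sum_mono) (simp add: mult_left_mono)
  also have "\<dots> \<le> m"
    using lin_solution_eq[OF w q0(1)] q0(2) b[OF q0(1)] by simp
  finally have "c * m \<le> m"
    using mult_right_mono_neg[OF row_sum_le[OF q0(1)], of m] \<open>m < 0\<close> by linarith
  then show False
    using \<open>m < 0\<close> c_less_1 mult_strict_right_mono_neg[of c 1 m] by simp
qed

lemma lin_solution_unique:
  assumes "lin_solution J A b w" "lin_solution J A b w'"
  shows "w = w'"
proof
  fix q
  have "lin_solution J A (\<lambda>q. 0) (\<lambda>q. w q - w' q)"
    using lin_solution_lincomb[OF assms, of 1 "-1"] by simp
  then have "\<bar>w q - w' q\<bar> \<le> 0 / (1 - c)" if "q \<in> J"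
    by (rule lin_solution_bound[OF _ _ that]) simp
  then show "w q = w' q"
    using assms by (cases "q \<in> J") (auto simp: lin_solution_def)
qed

primrec neumann_term :: "('b \<Rightarrow> real) \<Rightarrow> nat \<Rightarrow> 'b \<Rightarrow> real" where
  "neumann_term b 0 q = (if q \<in> J then b q else 0)"
| "neumann_term b (Suc n) q = (if q \<in> J then \<Sum>r\<in>J. A q r * neumann_term b n r else 0)"

lemma abs_neumann_term_le: "\<bar>neumann_term b n q\<bar> \<le> max c 0 ^ n * (\<Sum>r\<in>J. \<bar>b r\<bar>)"
proof (induction n arbitrary: q)
  case 0
  show ?case
    using finite_J member_le_sum[of q J "\<lambda>r. \<bar>b r\<bar>"] by (auto intro: sum_nonneg)
next
  case (Suc n)
  let ?B = "max c 0 ^ n * (\<Sum>r\<in>J. \<bar>b r\<bar>)"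
  have "0 \<le> ?B"
    using Suc.IH[of q] by linarith
  then have "c * ?B \<le> max c 0 * ?B" "0 \<le> max c 0 * ?B"
    by (simp_all add: mult_right_mono)
  moreover have "\<bar>\<Sum>r\<in>J. A q r * neumann_term b n r\<bar> \<le> c * ?B" if "q \<in> J"
    using abs_row_sum_le[OF that, of "neumann_term b n" ?B] Suc.IH by fastforce
  ultimately show ?case
    by auto
qed

lemma summable_neumann_term: "summable (\<lambda>n. neumann_term b n q)"
proof (rule summable_comparison_test)
  show "\<exists>N. \<forall>n\<ge>N. norm (neumann_term b n q) \<le> max c 0 ^ n * (\<Sum>r\<in>J. \<bar>b r\<bar>)"
    using abs_neumann_term_le by auto
  show "summable (\<lambda>n. max c 0 ^ n * (\<Sum>r\<in>J. \<bar>b r\<bar>))"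
    using c_less_1 by (intro summable_mult2 summable_geometric) simp
qed

lemma lin_solution_neumann_series: "lin_solution J A b (\<lambda>q. \<Sum>n. neumann_term b n q)"
  unfolding lin_solution_def
proof (intro conjI allI impI ballI)
  fix q
  assume "q \<notin> J"
  then have "neumann_term b n q = 0" for n
    by (cases n) simp_all
  then show "(\<Sum>n. neumann_term b n q) = 0"
    by simp
next
  fix q
  assume q: "q \<in> J"
  have "(\<Sum>r\<in>J. A q r * (\<Sum>n. neumann_term b n r)) = (\<Sum>n. \<Sum>r\<in>J. A q r * neumann_term b n r)"
    using summable_neumann_term
    by (simp add: suminf_mult[symmetric] suminf_sum[symmetric] summable_mult)
  also have "\<dots> = (\<Sum>n. neumann_term b (Suc n) q)"
    using q by simp
  also have "\<dots> = (\<Sum>n. neumann_term b n q) - neumann_term b 0 q"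
    by (rule suminf_split_head[OF summable_neumann_term])
  finally show "(\<Sum>n. neumann_term b n q) - (\<Sum>r\<in>J. A q r * (\<Sum>n. neumann_term b n r)) = b q"
    using q by simp
qed

lemma ex1_lin_solution: "\<exists>!w. lin_solution J A b w"
  using lin_solution_neumann_series lin_solution_unique by blast

end

section \<open>Disjoint unions of Feller resolvents\<close>

locale disjoint_union =
  fixes Nn :: nat and S :: "nat \<Rightarrow> 'a::t2_space set"
    and R :: "nat \<Rightarrow> real \<Rightarrow> ('a \<Rightarrow> real) \<Rightarrow> 'a \<Rightarrow> real"
  assumes S_compact: "\<And>i. i \<in> {1..Nn} \<Longrightarrow> compact (S i)"
    and S_disjoint: "\<And>i k. i \<in> {1..Nn} \<Longrightarrow> k \<in> {1..Nn} \<Longrightarrow> i \<noteq> k \<Longrightarrow> S i \<inter> S k = {}"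
    and R_feller: "\<And>i. i \<in> {1..Nn} \<Longrightarrow> feller_resolvent (S i) (R i)"
begin

abbreviation Su :: "'a set" where
  "Su \<equiv> S_union Nn S"

lemma feller_component: "i \<in> {1..Nn} \<Longrightarrow> feller (S i) (R i)"
  by (simp add: feller_def R_feller)

lemma S_subset_Su: "i \<in> {1..Nn} \<Longrightarrow> S i \<subseteq> Su"
  by (auto simp: S_union_def)

lemma compact_Su: "compact Su"
  unfolding S_union_def by (intro compact_UN S_compact) auto

lemma indicator_Su: "indicator Su x = (\<Sum>i\<in>{1..Nn}. indicator (S i) x :: real)"
  unfolding S_union_def
  by (rule indicator_UN_disjoint) (auto simp: disjoint_family_on_def S_disjoint)

lemma CS_component_Su:
  assumes i: "i \<in> {1..Nn}" and g: "g \<in> CS (S i)"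
  shows "g \<in> CS Su"
proof (rule CS_extend[OF g S_subset_Su[OF i]])
  show "closed (S i)"
    using i by (simp add: S_compact compact_imp_closed)
  have "Su - S i = (\<Union>k\<in>{1..Nn} - {i}. S k)"
    using i S_disjoint unfolding S_union_def by blast
  then show "closed (Su - S i)"
    by (auto simp: S_compact compact_imp_closed)
qed

lemma R_du_eq: "R_du Nn S R l f x = (\<Sum>i\<in>{1..Nn}. R i l (\<lambda>y. f y * indicator (S i) y) x)"
  by (simp add: R_du_def)

lemma CS_restrict_Su: "i \<in> {1..Nn} \<Longrightarrow> f \<in> CS Su \<Longrightarrow> (\<lambda>y. f y * indicator (S i) y) \<in> CS (S i)"
  using CS_restrict S_subset_Su by blast

lemma R_du_restrict:
  assumes "l > 0" "f \<in> CS Su" "i \<in> {1..Nn}"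
  shows "(\<lambda>x. R_du Nn S R l f x * indicator (S i) x) = R i l (\<lambda>y. f y * indicator (S i) y)"
proof
  fix x
  show "R_du Nn S R l f x * indicator (S i) x = R i l (\<lambda>y. f y * indicator (S i) y) x"
  proof (cases "x \<in> S i")
    case True
    have "R k l (\<lambda>y. f y * indicator (S k) y) x = 0" if "k \<in> {1..Nn}" "k \<noteq> i" for k
      using S_disjoint[OF assms(3) that(1)] that True assms(1,2)
      by (intro feller.R_vanishes[OF feller_component] CS_restrict_Su) auto
    then show ?thesis
      unfolding R_du_eq using True assms(3) by (subst sum_eq_single[of _ i]) auto
  next
    case False
    then show ?thesis
      using assms by (simp add: feller.R_vanishes[OF feller_component] CS_restrict_Su)
  qed
qed

lemma R_du_component:
  assumes "l > 0" "i \<in> {1..Nn}" "g \<in> CS (S i)"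
  shows "R_du Nn S R l g = R i l g"
proof
  fix x
  have "(\<lambda>y. g y * indicator (S k) y) = (if k = i then g else (\<lambda>y. 0))" if "k \<in> {1..Nn}" for k
    using S_disjoint[OF assms(2) that] CS_vanishes[OF assms(3)]
    by (auto simp: fun_eq_iff indicator_def)
  then show "R_du Nn S R l g x = R i l g x"
    unfolding R_du_eq using assms feller.R_zero[OF feller_component]
    by (subst sum_eq_single[of _ i]) auto
qed

lemma R_du_CS:
  assumes "l > 0" "f \<in> CS Su"
  shows "R_du Nn S R l f \<in> CS Su"
proof -
  have "R i l (\<lambda>y. f y * indicator (S i) y) \<in> CS Su" if "i \<in> {1..Nn}" for i
    using CS_component_Su[OF that]
      feller.R_CS[OF feller_component[OF that] assms(1) CS_restrict_Su[OF that assms(2)]] by blast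
  then show ?thesis
    unfolding R_du_def by (intro CS_sum) auto
qed

lemma R_du_lincomb:
  assumes "l > 0" "f \<in> CS Su" "g \<in> CS Su"
  shows "R_du Nn S R l (\<lambda>x. a * f x + b * g x) = (\<lambda>x. a * R_du Nn S R l f x + b * R_du Nn S R l g x)"
proof -
  have "R i l (\<lambda>y. (a * f y + b * g y) * indicator (S i) y) =
      (\<lambda>x. a * R i l (\<lambda>y. f y * indicator (S i) y) x + b * R i l (\<lambda>y. g y * indicator (S i) y) x)"
    if "i \<in> {1..Nn}" for i
    using feller.R_lincomb[OF feller_component[OF that] assms(1)
        CS_restrict_Su[OF that assms(2)] CS_restrict_Su[OF that assms(3)]]
    by (simp add: algebra_simps)
  then show ?thesis
    by (simp add: R_du_def sum.distrib sum_distrib_left)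
qed

lemma R_du_resolvent_eq:
  assumes "l > 0" "m > 0" "f \<in> CS Su"
  shows "R_du Nn S R l f x - R_du Nn S R m f x = (m - l) * R_du Nn S R l (R_du Nn S R m f) x"
proof -
  have "R_du Nn S R l f x - R_du Nn S R m f x =
      (\<Sum>i\<in>{1..Nn}. R i l (\<lambda>y. f y * indicator (S i) y) x - R i m (\<lambda>y. f y * indicator (S i) y) x)"
    by (simp add: R_du_eq sum_subtractf)
  also have "\<dots> = (\<Sum>i\<in>{1..Nn}. (m - l) * R i l (\<lambda>y. R_du Nn S R m f y * indicator (S i) y) x)"
    using assms by (intro sum.cong refl)
      (simp add: R_du_restrict feller.resolvent_eq[OF feller_component] CS_restrict_Su)
  also have "\<dots> = (m - l) * R_du Nn S R l (R_du Nn S R m f) x"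
    by (simp only: R_du_eq[of l "R_du Nn S R m f" x] sum_distrib_left)
  finally show ?thesis .
qed

lemma R_du_nonneg:
  assumes "l > 0" "f \<in> CS Su" "\<And>x. x \<in> Su \<Longrightarrow> 0 \<le> f x"
  shows "0 \<le> R_du Nn S R l f x"
proof (cases "x \<in> Su")
  case True
  then obtain i where i: "i \<in> {1..Nn}" "x \<in> S i"
    by (auto simp: S_union_def)
  have "0 \<le> R i l (\<lambda>y. f y * indicator (S i) y) x"
    using assms i S_subset_Su[OF i(1)]
    by (intro feller.R_nonneg[OF feller_component] CS_restrict_Su) (auto simp: indicator_def)
  then show ?thesis
    using fun_cong[OF R_du_restrict[OF assms(1,2) i(1)], of x] i(2) by simp
next
  case False
  then show ?thesis
    using R_du_CS[OF assms(1,2)] CS_vanishes by fastforce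
qed

lemma R_du_indicator_le:
  assumes "l > 0" "x \<in> Su"
  shows "l * R_du Nn S R l (indicator Su) x \<le> 1"
proof -
  obtain i where i: "i \<in> {1..Nn}" "x \<in> S i"
    using assms(2) by (auto simp: S_union_def)
  have "(\<lambda>y. indicator Su y * indicator (S i) y) = (indicator (S i) :: 'a \<Rightarrow> real)"
    using S_subset_Su[OF i(1)] by (auto simp: indicator_def fun_eq_iff)
  then have "R_du Nn S R l (indicator Su) x = R i l (indicator (S i)) x"
    using fun_cong[OF R_du_restrict[OF assms(1) CS_indicator i(1)], of x] i(2) by simp
  then show ?thesis
    using feller.R_indicator_le[OF feller_component[OF i(1)] assms(1) i(2)] by simp
qed

lemma uniform_limit_R_du:
  assumes "f \<in> CS Su"
  shows "uniform_limit UNIV (\<lambda>l x. l * R_du Nn S R l f x) f at_top"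
proof -
  have lim: "uniform_limit UNIV (\<lambda>l x. \<Sum>i\<in>{1..Nn}. l * R i l (\<lambda>y. f y * indicator (S i) y) x)
      (\<lambda>x. \<Sum>i\<in>{1..Nn}. f x * indicator (S i) x) at_top"
    using assms by (intro uniform_limit_sum feller.uniform_limit_R[OF feller_component] CS_restrict_Su) auto
  have "(\<Sum>i\<in>{1..Nn}. f x * indicator (S i) x) = f x * indicator Su x" for x
    by (simp only: indicator_Su sum_distrib_left)
  also have "f x * indicator Su x = f x" for x
    using CS_vanishes[OF assms, of x] by (cases "x \<in> Su") simp_all
  finally have "(\<lambda>x. \<Sum>i\<in>{1..Nn}. f x * indicator (S i) x) = f"
    by (rule ext)
  then show ?thesis
    using lim unfolding R_du_eq sum_distrib_left by simp
qed

lemma feller_R_du: "feller Su (R_du Nn S R)"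
  unfolding feller_def feller_resolvent_def
  using R_du_CS R_du_lincomb R_du_resolvent_eq R_du_nonneg R_du_indicator_le
    uniform_limit_on_subset[OF uniform_limit_R_du] by auto

sublocale du: feller Su "R_du Nn S R"
  by (rule feller_R_du)

end

section \<open>Gluing at the exit boundaries\<close>

locale glued_resolvents = disjoint_union Nn S R
  for Nn and S :: "nat \<Rightarrow> 'a::t2_space set" and R +
  fixes M :: nat and \<kappa> :: "nat \<Rightarrow> nat" and \<phi> :: "nat \<Rightarrow> nat \<Rightarrow> 'a \<Rightarrow> real"
    and p :: "nat \<times> nat \<Rightarrow> 'a measure"
  assumes M_le: "M \<le> Nn"
    and conservative: "\<And>i. i \<in> {M+1..Nn} \<Longrightarrow> conservative_resolvent (S i) (R i)"
    and phi_CS: "\<And>i j. i \<in> {1..M} \<Longrightarrow> j \<in> {1..\<kappa> i} \<Longrightarrow> \<phi> i j \<in> CS (S i)"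
    and phi_excessive: "\<And>i j l x. i \<in> {1..M} \<Longrightarrow> j \<in> {1..\<kappa> i} \<Longrightarrow> l > 0 \<Longrightarrow> x \<in> S i
                          \<Longrightarrow> l * R i l (\<phi> i j) x \<le> \<phi> i j x"
    and phi_sum: "\<And>i x. i \<in> {1..M} \<Longrightarrow> x \<in> S i \<Longrightarrow> (\<Sum>j\<in>{1..\<kappa> i}. \<phi> i j x) = 1"
    and p_sets: "\<And>q. q \<in> idx_IJ M \<kappa> \<Longrightarrow> sets (p q) = sets (restrict_space borel (S_union Nn S))"
    and p_subprob: "\<And>q. q \<in> idx_IJ M \<kappa> \<Longrightarrow> subprob_space (p q)"
begin

abbreviation IJ :: "(nat \<times> nat) set" where
  "IJ \<equiv> idx_IJ M \<kappa>"

abbreviation ell :: "nat \<times> nat \<Rightarrow> real \<Rightarrow> 'a \<Rightarrow> real" where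
  "ell q \<equiv> exit_ell (R (fst q)) (\<phi> (fst q) (snd q))"

abbreviation N :: "real \<Rightarrow> nat \<times> nat \<Rightarrow> nat \<times> nat \<Rightarrow> real" where
  "N l \<equiv> N_mat S R \<phi> p l"

abbreviation bvec :: "real \<Rightarrow> ('a \<Rightarrow> real) \<Rightarrow> nat \<times> nat \<Rightarrow> real" where
  "bvec l f q \<equiv> integral\<^sup>L (p q) (R_du Nn S R l f)"

abbreviation u :: "real \<Rightarrow> ('a \<Rightarrow> real) \<Rightarrow> nat \<times> nat \<Rightarrow> real" where
  "u \<equiv> u_coef Nn M \<kappa> S R \<phi> p"

lemma IJ_eq: "IJ = Sigma {1..M} (\<lambda>i. {1..\<kappa> i})"
  by (auto simp: idx_IJ_def)

lemma finite_IJ: "finite IJ"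
  by (simp add: IJ_eq)

lemma fst_IJ: "q \<in> IJ \<Longrightarrow> fst q \<in> {1..Nn}"
  using M_le by (auto simp: idx_IJ_def)

lemma feller_IJ: "q \<in> IJ \<Longrightarrow> feller (S (fst q)) (R (fst q))"
  using feller_component fst_IJ by blast

lemma phi_CS_IJ: "q \<in> IJ \<Longrightarrow> \<phi> (fst q) (snd q) \<in> CS (S (fst q))"
  by (auto simp: idx_IJ_def intro: phi_CS)

lemma ell_CS: "q \<in> IJ \<Longrightarrow> l > 0 \<Longrightarrow> ell q l \<in> CS (S (fst q))"
  using feller.exit_ell_CS[OF feller_IJ] phi_CS_IJ by blast

lemma ell_CS_Su: "q \<in> IJ \<Longrightarrow> l > 0 \<Longrightarrow> ell q l \<in> CS Su"
  using CS_component_Su[OF fst_IJ ell_CS] .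

lemma ell_nonneg: "q \<in> IJ \<Longrightarrow> l > 0 \<Longrightarrow> 0 \<le> ell q l x"
  by (rule feller.exit_ell_nonneg[OF feller_IJ _ phi_CS_IJ]) (auto simp: idx_IJ_def phi_excessive)

lemma ell_resolvent_eq:
  assumes "q \<in> IJ" "l > 0" "m > 0"
  shows "ell q m x + (m - l) * R_du Nn S R l (ell q m) x = ell q l x"
  using feller.exit_ell_resolvent_eq[OF feller_IJ[OF assms(1)] assms(2,3) phi_CS_IJ[OF assms(1)]]
  by (simp add: R_du_component[OF assms(2) fst_IJ[OF assms(1)] ell_CS[OF assms(1,3)]])

lemma uniform_limit_ell: "q \<in> IJ \<Longrightarrow> uniform_limit UNIV (ell q) (\<lambda>x. 0) at_top"
  using feller.uniform_limit_exit_ell[OF feller_IJ phi_CS_IJ] .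

lemma sum_ell_CS: "l > 0 \<Longrightarrow> (\<lambda>x. \<Sum>q\<in>IJ. ell q l x) \<in> CS Su"
  by (intro CS_sum finite_IJ ell_CS_Su)

lemma sum_ell_eq:
  assumes l: "l > 0"
  shows "(\<Sum>q\<in>IJ. ell q l x) = indicator Su x - l * R_du Nn S R l (indicator Su) x"
proof -
  have "(\<Sum>j\<in>{1..\<kappa> i}. ell (i, j) l x) = indicator (S i) x - l * R i l (indicator (S i)) x"
    if i: "i \<in> {1..M}" for i
  proof -
    have sum_phi: "(\<lambda>x. \<Sum>j\<in>{1..\<kappa> i}. 1 * \<phi> i j x) = indicator (S i)"
      using i phi_sum CS_vanishes[OF phi_CS[OF i]] by (auto simp: fun_eq_iff indicator_def)
    have "(\<Sum>j\<in>{1..\<kappa> i}. 1 * R i l (\<phi> i j) x) = R i l (indicator (S i)) x"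
      using feller.R_sum[OF feller_component l, of i "{1..\<kappa> i}" "\<phi> i" "\<lambda>_. 1"] i M_le phi_CS
      unfolding sum_phi by auto
    then show ?thesis
      using sum_phi by (simp add: exit_ell_def sum_subtractf sum_distrib_left[symmetric] fun_eq_iff)
  qed
  moreover have "(\<Sum>q\<in>IJ. ell q l x) = (\<Sum>i\<in>{1..M}. \<Sum>j\<in>{1..\<kappa> i}. ell (i, j) l x)"
    unfolding IJ_eq by (simp add: sum.Sigma split_def)
  ultimately have ell: "(\<Sum>q\<in>IJ. ell q l x) = (\<Sum>i\<in>{1..M}. indicator (S i) x - l * R i l (indicator (S i)) x)"
    by simp
  have "(\<lambda>y. indicator Su y * indicator (S i) y) = (indicator (S i) :: 'a \<Rightarrow> real)" if "i \<in> {1..Nn}" for i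
    using S_subset_Su[OF that] by (auto simp: indicator_def fun_eq_iff)
  then have R_du: "l * R_du Nn S R l (indicator Su) x = (\<Sum>i\<in>{1..Nn}. l * R i l (indicator (S i)) x)"
    by (simp add: R_du_eq sum_distrib_left)
  have cons: "(\<Sum>i\<in>{M+1..Nn}. l * R i l (indicator (S i)) x) = (\<Sum>i\<in>{M+1..Nn}. indicator (S i) x)"
    using feller.R_indicator_conservative[OF feller_component conservative l] by simp
  have split: "{1..Nn} = {1..M} \<union> {M+1..Nn}" "{1..M} \<inter> {M+1..Nn} = {}"
    using M_le by auto
  show ?thesis
    unfolding ell R_du indicator_Su split(1) sum.union_disjoint[OF finite_atLeastAtMost finite_atLeastAtMost split(2)]
    using cons by (simp add: sum_subtractf)
qed

lemma sum_ell_less_1: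
  assumes "l > 0"
  shows "\<exists>c<1. \<forall>x\<in>Su. (\<Sum>q\<in>IJ. ell q l x) \<le> c"
proof (cases "Su = {}")
  case True
  then show ?thesis
    by (intro exI[of _ 0]) simp
next
  case False
  obtain x0 where x0: "x0 \<in> Su" "\<And>x. x \<in> Su \<Longrightarrow> (\<Sum>q\<in>IJ. ell q l x) \<le> (\<Sum>q\<in>IJ. ell q l x0)"
    using continuous_attains_sup[OF compact_Su False CS_continuous_on[OF sum_ell_CS[OF assms]]] by blast
  have "0 < l * R_du Nn S R l (indicator Su) x0"
    using du.R_indicator_pos[OF assms x0(1)] assms by simp
  then have "(\<Sum>q\<in>IJ. ell q l x0) < 1"
    using sum_ell_eq[OF assms, of x0] x0(1) by simp
  then show ?thesis
    using x0(2) by (intro exI[of _ "\<Sum>q\<in>IJ. ell q l x0"]) simp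
qed

lemma eventually_sum_ell_le: "\<forall>\<^sub>F l in at_top. \<forall>x. (\<Sum>q\<in>IJ. ell q l x) \<le> 1/2"
proof -
  have "uniform_limit UNIV (\<lambda>l x. \<Sum>q\<in>IJ. ell q l x) (\<lambda>x. \<Sum>q\<in>IJ. 0) at_top"
    by (intro uniform_limit_sum finite_IJ uniform_limit_ell)
  then have "\<forall>\<^sub>F l in at_top. \<forall>x\<in>UNIV. dist (\<Sum>q\<in>IJ. ell q l x) (\<Sum>q\<in>IJ. 0) < 1/2"
    by (rule uniform_limitD) simp
  then show ?thesis
  proof (rule eventually_mono)
    fix l
    assume "\<forall>x\<in>UNIV. dist (\<Sum>q\<in>IJ. ell q l x) (\<Sum>q\<in>IJ. 0) < 1/2"
    then have "\<bar>\<Sum>q\<in>IJ. ell q l x\<bar> < 1/2" for x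
      by (simp add: dist_real_def)
    then show "\<forall>x. (\<Sum>q\<in>IJ. ell q l x) \<le> 1/2"
      by (meson abs_ge_self le_less_trans less_imp_le)
  qed
qed

lemma space_p: "q \<in> IJ \<Longrightarrow> space (p q) = Su"
  using sets_eq_imp_space_eq[OF p_sets] by (simp add: space_restrict_space)

lemma integrable_p: "q \<in> IJ \<Longrightarrow> f \<in> CS Su \<Longrightarrow> integrable (p q) f"
  using integrable_CS[OF _ p_sets compact_Su] p_subprob subprob_space_def by blast

lemma integral_p_le:
  assumes "q \<in> IJ" "f \<in> CS Su" "\<And>x. x \<in> Su \<Longrightarrow> f x \<le> c" "0 \<le> c"
  shows "integral\<^sup>L (p q) f \<le> c"
proof -
  interpret subprob_space "p q"
    by (rule p_subprob[OF assms(1)])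
  have "integral\<^sup>L (p q) f \<le> integral\<^sup>L (p q) (\<lambda>x. c)"
    using assms by (intro integral_mono integrable_p[OF assms(1,2)]) (auto simp: space_p)
  also have "\<dots> \<le> c"
    using subprob_measure_le_1 assms(4) by (simp add: mult_left_le_one_le)
  finally show ?thesis .
qed

lemma integral_p_nonneg:
  "q \<in> IJ \<Longrightarrow> (\<And>x. x \<in> Su \<Longrightarrow> 0 \<le> f x) \<Longrightarrow> 0 \<le> integral\<^sup>L (p q) (f :: 'a \<Rightarrow> real)"
  by (intro integral_nonneg_AE AE_I2) (simp add: space_p)

lemma abs_integral_p_le:
  assumes "q \<in> IJ" "f \<in> CS Su" "\<And>x. x \<in> Su \<Longrightarrow> \<bar>f x\<bar> \<le> K" "0 \<le> K"
  shows "\<bar>integral\<^sup>L (p q) f\<bar> \<le> K"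
proof -
  have "integral\<^sup>L (p q) f \<le> K"
    using assms by (intro integral_p_le) (auto simp: abs_le_iff)
  moreover have "integral\<^sup>L (p q) (\<lambda>x. - 1 * f x) \<le> K"
    using assms by (intro integral_p_le CS_scale) (auto simp: abs_le_iff)
  ultimately show ?thesis
    by (simp add: abs_le_iff)
qed

lemma N_eq: "r \<in> IJ \<Longrightarrow> l > 0 \<Longrightarrow> N l q r = integral\<^sup>L (p q) (ell r l)"
  unfolding N_mat_def set_lebesgue_integral_def
  using CS_vanishes[OF ell_CS] by (intro Bochner_Integration.integral_cong) (auto simp: indicator_def)

lemma N_nonneg: "q \<in> IJ \<Longrightarrow> r \<in> IJ \<Longrightarrow> l > 0 \<Longrightarrow> 0 \<le> N l q r"
  by (simp add: N_eq integral_p_nonneg ell_nonneg)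

lemma integrable_ell [simp]: "q \<in> IJ \<Longrightarrow> r \<in> IJ \<Longrightarrow> l > 0 \<Longrightarrow> integrable (p q) (ell r l)"
  by (simp add: integrable_p ell_CS_Su)

lemma integrable_R_du [simp]: "q \<in> IJ \<Longrightarrow> l > 0 \<Longrightarrow> f \<in> CS Su \<Longrightarrow> integrable (p q) (R_du Nn S R l f)"
  by (simp add: integrable_p du.R_CS)

lemma integral_sum_ell:
  assumes "q \<in> IJ" "l > 0"
  shows "integral\<^sup>L (p q) (\<lambda>x. \<Sum>r\<in>IJ. c r * ell r l x) = (\<Sum>r\<in>IJ. c r * N l q r)"
  using assms by (simp add: N_eq)

lemma row_sum_N: "q \<in> IJ \<Longrightarrow> l > 0 \<Longrightarrow> (\<Sum>r\<in>IJ. N l q r) = integral\<^sup>L (p q) (\<lambda>x. \<Sum>r\<in>IJ. ell r l x)"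
  by (simp add: N_eq)

lemma row_sum_N_total_mass:
  assumes "l > 0" "q \<in> IJ"
  shows "(\<Sum>r\<in>IJ. N l q r) + l * bvec l (indicator Su) q = measure (p q) Su"
proof -
  have "(\<Sum>r\<in>IJ. N l q r) + l * bvec l (indicator Su) q
      = integral\<^sup>L (p q) (\<lambda>x. (\<Sum>r\<in>IJ. ell r l x) + l * R_du Nn S R l (indicator Su) x)"
    using assms
    by (simp add: row_sum_N integrable_p sum_ell_CS du.R_CS CS_scale Bochner_Integration.integral_add)
  also have "\<dots> = integral\<^sup>L (p q) (\<lambda>x. 1)"
    using assms by (intro Bochner_Integration.integral_cong) (auto simp: sum_ell_eq space_p)
  finally show ?thesis
    using assms(2) by (simp add: space_p)
qed

lemma N_substochastic:
  assumes "l > 0" "0 \<le> c" "c < 1" "\<And>x. x \<in> Su \<Longrightarrow> (\<Sum>q\<in>IJ. ell q l x) \<le> c"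
  shows "strictly_substochastic IJ (N l) c"
proof
  fix q
  assume "q \<in> IJ"
  then show "(\<Sum>r\<in>IJ. N l q r) \<le> c"
    unfolding row_sum_N[OF \<open>q \<in> IJ\<close> assms(1)] using assms by (intro integral_p_le sum_ell_CS)
qed (use assms finite_IJ N_nonneg in auto)

lemma ex_N_substochastic:
  assumes "l > 0"
  shows "\<exists>c. strictly_substochastic IJ (N l) c"
proof -
  obtain c where "c < 1" "\<And>x. x \<in> Su \<Longrightarrow> (\<Sum>q\<in>IJ. ell q l x) \<le> c"
    using sum_ell_less_1[OF assms] by blast
  then have "strictly_substochastic IJ (N l) (max 0 c)"
    using assms by (intro N_substochastic) (auto intro: le_max_iff_disj[THEN iffD2])
  then show ?thesis ..
qed

lemma eventually_N_substochastic: "\<forall>\<^sub>F l in at_top. l > 0 \<and> strictly_substochastic IJ (N l) (1/2)"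
  using eventually_sum_ell_le eventually_gt_at_top[of 0]
  by eventually_elim (simp add: N_substochastic)

lemma u_eq_The: "u l f = (THE w. lin_solution IJ (N l) (bvec l f) w)"
  by (simp add: u_coef_def lin_solution_def)

lemma u_solution:
  assumes "l > 0"
  shows "lin_solution IJ (N l) (bvec l f) (u l f)"
proof -
  obtain c where "strictly_substochastic IJ (N l) c"
    using ex_N_substochastic[OF assms] ..
  then show ?thesis
    unfolding u_eq_The by (rule theI'[OF strictly_substochastic.ex1_lin_solution])
qed

lemma u_eqI:
  assumes "l > 0" "lin_solution IJ (N l) (bvec l f) w"
  shows "u l f = w"
proof -
  obtain c where "strictly_substochastic IJ (N l) c"
    using ex_N_substochastic[OF assms(1)] ..
  then show ?thesis
    using strictly_substochastic.lin_solution_unique u_solution assms by blast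
qed

abbreviation Rco :: "real \<Rightarrow> ('a \<Rightarrow> real) \<Rightarrow> 'a \<Rightarrow> real" where
  "Rco \<equiv> R_co Nn M \<kappa> S R \<phi> p"

lemma R_co_eq: "Rco l f x = R_du Nn S R l f x + (\<Sum>q\<in>IJ. u l f q * ell q l x)"
  by (simp add: R_co_def)

lemma R_co_CS:
  assumes "l > 0" "f \<in> CS Su"
  shows "Rco l f \<in> CS Su"
proof -
  have "(\<lambda>x. \<Sum>q\<in>IJ. u l f q * ell q l x) \<in> CS Su"
    using assms by (intro CS_sum finite_IJ CS_scale ell_CS_Su)
  then show ?thesis
    using CS_lincomb[OF du.R_CS[OF assms], of _ 1 1] by (simp add: R_co_def)
qed

lemma u_lincomb:
  assumes "l > 0" "f \<in> CS Su" "g \<in> CS Su"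
  shows "u l (\<lambda>x. a * f x + b * g x) = (\<lambda>q. a * u l f q + b * u l g q)"
proof (rule u_eqI[OF assms(1)])
  show "lin_solution IJ (N l) (bvec l (\<lambda>x. a * f x + b * g x)) (\<lambda>q. a * u l f q + b * u l g q)"
    using lin_solution_lincomb[OF u_solution[OF assms(1)] u_solution[OF assms(1)]]
    by (rule lin_solution_cong) (use assms in \<open>simp add: du.R_lincomb\<close>)
qed

lemma R_co_lincomb:
  assumes "l > 0" "f \<in> CS Su" "g \<in> CS Su"
  shows "Rco l (\<lambda>x. a * f x + b * g x) = (\<lambda>x. a * Rco l f x + b * Rco l g x)"
  using assms
  by (simp add: R_co_def u_lincomb du.R_lincomb sum.distrib sum_distrib_left algebra_simps)

lemma u_nonneg:
  assumes "l > 0" "f \<in> CS Su" "\<And>x. x \<in> Su \<Longrightarrow> 0 \<le> f x"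
  shows "0 \<le> u l f q"
proof -
  obtain c where "strictly_substochastic IJ (N l) c"
    using ex_N_substochastic[OF assms(1)] ..
  then show ?thesis
    using assms by (intro strictly_substochastic.lin_solution_nonneg[OF _ u_solution])
      (auto intro: integral_p_nonneg du.R_nonneg)
qed

lemma R_co_nonneg:
  assumes "l > 0" "f \<in> CS Su" "\<And>x. x \<in> Su \<Longrightarrow> 0 \<le> f x"
  shows "0 \<le> Rco l f x"
  unfolding R_co_eq using assms
  by (intro add_nonneg_nonneg sum_nonneg mult_nonneg_nonneg u_nonneg ell_nonneg du.R_nonneg) auto

lemma R_du_R_co_resolvent:
  assumes "l > 0" "m > 0" "f \<in> CS Su"
  shows "(m - l) * R_du Nn S R l (Rco m f) x
    = R_du Nn S R l f x - R_du Nn S R m f x + (\<Sum>q\<in>IJ. u m f q * ell q l x) - (\<Sum>q\<in>IJ. u m f q * ell q m x)"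
proof -
  have "R_du Nn S R l (Rco m f) = R_du Nn S R l (\<lambda>x. 1 * R_du Nn S R m f x + 1 * (\<Sum>q\<in>IJ. u m f q * ell q m x))"
    by (simp add: R_co_def)
  also have "\<dots> = (\<lambda>x. 1 * R_du Nn S R l (R_du Nn S R m f) x
      + 1 * R_du Nn S R l (\<lambda>x. \<Sum>q\<in>IJ. u m f q * ell q m x) x)"
    using assms by (intro du.R_lincomb du.R_CS CS_sum CS_scale finite_IJ ell_CS_Su)
  also have "R_du Nn S R l (\<lambda>x. \<Sum>q\<in>IJ. u m f q * ell q m x) = (\<lambda>x. \<Sum>q\<in>IJ. u m f q * R_du Nn S R l (ell q m) x)"
    using assms by (intro du.R_sum finite_IJ ell_CS_Su)
  finally have "(m - l) * R_du Nn S R l (Rco m f) x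
      = (m - l) * R_du Nn S R l (R_du Nn S R m f) x + (\<Sum>q\<in>IJ. u m f q * ((m - l) * R_du Nn S R l (ell q m) x))"
    by (simp add: algebra_simps sum_distrib_left)
  also have "\<dots> = R_du Nn S R l f x - R_du Nn S R m f x + (\<Sum>q\<in>IJ. u m f q * (ell q l x - ell q m x))"
  proof -
    have "(m - l) * R_du Nn S R l (ell q m) x = ell q l x - ell q m x" if "q \<in> IJ" for q
      using ell_resolvent_eq[OF that assms(1,2), of x] by linarith
    then show ?thesis
      using du.resolvent_eq[OF assms, of x] by simp
  qed
  finally show ?thesis
    by (simp add: right_diff_distrib sum_subtractf)
qed

lemma bvec_R_co_resolvent:
  assumes "l > 0" "m > 0" "f \<in> CS Su" "q \<in> IJ"
  shows "(m - l) * bvec l (Rco m f) q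
    = bvec l f q - bvec m f q - (\<Sum>r\<in>IJ. (N m q r - N l q r) * u m f r)"
proof -
  have "(m - l) * bvec l (Rco m f) q = integral\<^sup>L (p q) (\<lambda>x. (m - l) * R_du Nn S R l (Rco m f) x)"
    by simp
  also have "\<dots> = bvec l f q - bvec m f q + (\<Sum>r\<in>IJ. u m f r * N l q r) - (\<Sum>r\<in>IJ. u m f r * N m q r)"
    unfolding R_du_R_co_resolvent[OF assms(1-3)] using assms
    by (simp add: integral_sum_ell[symmetric] CS_sum CS_scale finite_IJ integrable_p ell_CS_Su)
  finally show ?thesis
    by (simp add: algebra_simps sum_subtractf)
qed

lemma u_resolvent_eq:
  assumes "l > 0" "m > 0" "f \<in> CS Su"
  shows "u l f = (\<lambda>q. u m f q + (m - l) * u l (Rco m f) q)"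
proof (rule u_eqI[OF assms(1)])
  have "lin_solution IJ (N l) (\<lambda>q. bvec m f q + (\<Sum>r\<in>IJ. (N m q r - N l q r) * u m f r)) (u m f)"
    by (rule lin_solution_change_matrix[OF u_solution[OF assms(2)]])
  from lin_solution_lincomb[OF this u_solution[OF assms(1), of "Rco m f"], of 1 "m - l"]
  have "lin_solution IJ (N l)
      (\<lambda>q. bvec m f q + (\<Sum>r\<in>IJ. (N m q r - N l q r) * u m f r) + (m - l) * bvec l (Rco m f) q)
      (\<lambda>q. u m f q + (m - l) * u l (Rco m f) q)"
    by simp
  then show "lin_solution IJ (N l) (bvec l f) (\<lambda>q. u m f q + (m - l) * u l (Rco m f) q)"
    by (rule lin_solution_cong) (use assms bvec_R_co_resolvent in simp)
qed

lemma R_co_resolvent_eq: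
  assumes "l > 0" "m > 0" "f \<in> CS Su"
  shows "Rco l f x - Rco m f x = (m - l) * Rco l (Rco m f) x"
proof -
  have "(\<Sum>q\<in>IJ. u l f q * ell q l x)
      = (\<Sum>q\<in>IJ. u m f q * ell q l x) + (m - l) * (\<Sum>q\<in>IJ. u l (Rco m f) q * ell q l x)"
    by (simp add: u_resolvent_eq[OF assms] distrib_right sum.distrib sum_distrib_left mult.assoc)
  then show ?thesis
    using R_du_R_co_resolvent[OF assms, of x] by (simp add: R_co_eq algebra_simps)
qed

lemma u_indicator_deficit:
  assumes "l > 0"
  shows "lin_solution IJ (N l) (\<lambda>q. (1 - measure (p q) Su) / l)
           (\<lambda>q. indicator IJ q / l - u l (indicator Su) q)"
proof -
  have "lin_solution IJ (N l) (\<lambda>q. 1 * (1 / l - 1 / l * (\<Sum>r\<in>IJ. N l q r)) + (- 1) * bvec l (indicator Su) q)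
      (\<lambda>q. 1 * (1 / l * indicator IJ q) + (- 1) * u l (indicator Su) q)"
    by (rule lin_solution_lincomb[OF lin_solution_const u_solution[OF assms]])
  moreover have "(\<lambda>q. 1 * (1 / l * indicator IJ q) + (- 1) * u l (indicator Su) q)
      = (\<lambda>q. indicator IJ q / l - u l (indicator Su) q)"
    by (simp add: fun_eq_iff)
  ultimately show ?thesis
    using row_sum_N_total_mass[OF assms] assms
    by (auto intro: lin_solution_cong simp: field_simps)
qed

lemma R_co_indicator_eq:
  assumes "l > 0"
  shows "l * Rco l (indicator Su) x
    = indicator Su x - l * (\<Sum>q\<in>IJ. (1 / l - u l (indicator Su) q) * ell q l x)"
  using sum_ell_eq[OF assms, of x] assms
  by (simp add: R_co_eq right_diff_distrib left_diff_distrib sum_subtractf sum_distrib_left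
      distrib_left mult.assoc)

lemma R_co_indicator_le:
  assumes "l > 0" "x \<in> Su"
  shows "l * Rco l (indicator Su) x \<le> 1"
proof -
  obtain c where c: "strictly_substochastic IJ (N l) c"
    using ex_N_substochastic[OF assms(1)] ..
  have "measure (p q) Su \<le> 1" if "q \<in> IJ" for q
    by (rule subprob_space.subprob_measure_le_1[OF p_subprob[OF that]])
  then have deficit: "0 \<le> indicator IJ q / l - u l (indicator Su) q" for q
    using assms(1) by (intro strictly_substochastic.lin_solution_nonneg[OF c u_indicator_deficit]) simp_all
  have "0 \<le> 1 / l - u l (indicator Su) q" if "q \<in> IJ" for q
    using deficit[of q] that by simp
  then have "0 \<le> (\<Sum>q\<in>IJ. (1 / l - u l (indicator Su) q) * ell q l x)"
    using assms(1) by (intro sum_nonneg mult_nonneg_nonneg ell_nonneg)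
  then show ?thesis
    using R_co_indicator_eq[OF assms(1), of x] assms by (simp add: mult_nonneg_nonneg)
qed

lemma R_co_indicator_conservative:
  assumes "l > 0" "x \<in> Su" "\<And>q. q \<in> IJ \<Longrightarrow> prob_space (p q)"
  shows "l * Rco l (indicator Su) x = 1"
proof -
  obtain c where c: "strictly_substochastic IJ (N l) c"
    using ex_N_substochastic[OF assms(1)] ..
  have "lin_solution IJ (N l) (\<lambda>q. 0) (\<lambda>q. indicator IJ q / l - u l (indicator Su) q)"
    using u_indicator_deficit[OF assms(1)]
  proof (rule lin_solution_cong)
    fix q
    assume "q \<in> IJ"
    then show "(1 - measure (p q) Su) / l = 0"
      using prob_space.prob_space[OF assms(3)] space_p by simp
  qed
  moreover have "lin_solution IJ (N l) (\<lambda>q. 0) (\<lambda>q. 0)"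
    by (simp add: lin_solution_def)
  ultimately have zero: "(\<lambda>q. indicator IJ q / l - u l (indicator Su) q) = (\<lambda>q. 0)"
    by (rule strictly_substochastic.lin_solution_unique[OF c])
  then have "u l (indicator Su) q = 1 / l" if "q \<in> IJ" for q
    using fun_cong[OF zero, of q] that by simp
  then show ?thesis
    using R_co_indicator_eq[OF assms(1), of x] assms(2) by simp
qed

lemma eventually_u_bounded:
  assumes "f \<in> CS Su"
  shows "\<exists>K. \<forall>\<^sub>F l in at_top. \<forall>q\<in>IJ. \<bar>l * u l f q\<bar> \<le> K"
proof -
  obtain K where K: "K \<ge> 0" "\<And>x. \<bar>f x\<bar> \<le> K"
    using CS_bounded[OF compact_Su assms] by blast
  have "\<forall>\<^sub>F l in at_top. \<forall>x\<in>UNIV. dist (l * R_du Nn S R l f x) (f x) < 1"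
    by (rule uniform_limitD[OF du.uniform_limit_R[OF assms]]) simp
  from eventually_N_substochastic this
  have "\<forall>\<^sub>F l in at_top. \<forall>q\<in>IJ. \<bar>l * u l f q\<bar> \<le> (K + 1) / (1 - 1/2)"
  proof eventually_elim
    case (elim l)
    then have l: "l > 0" and c: "strictly_substochastic IJ (N l) (1/2)"
      by auto
    have "\<bar>l * R_du Nn S R l f x\<bar> \<le> K + 1" for x
    proof -
      have "\<bar>l * R_du Nn S R l f x - f x\<bar> < 1"
        using elim(2) by (simp add: dist_real_def)
      then show ?thesis
        using K(2)[of x] unfolding abs_le_iff abs_less_iff by linarith
    qed
    then have "\<bar>integral\<^sup>L (p q) (\<lambda>x. l * R_du Nn S R l f x)\<bar> \<le> K + 1" if "q \<in> IJ" for q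
      using that l assms K(1) by (intro abs_integral_p_le CS_scale du.R_CS) auto
    then have "\<bar>l * bvec l f q\<bar> \<le> K + 1" if "q \<in> IJ" for q
      using that by simp
    then show ?case
      using strictly_substochastic.lin_solution_bound[OF c lin_solution_scale[OF u_solution[OF l]]]
      by blast
  qed
  then show ?thesis ..
qed

lemma uniform_limit_R_co:
  assumes "f \<in> CS Su"
  shows "uniform_limit UNIV (\<lambda>l x. l * Rco l f x) f at_top"
proof -
  obtain K where K: "\<forall>\<^sub>F l in at_top. \<forall>q\<in>IJ. \<bar>l * u l f q\<bar> \<le> K"
    using eventually_u_bounded[OF assms] by blast
  have "uniform_limit UNIV (\<lambda>l x. l * u l f q * ell q l x) (\<lambda>x. 0) at_top" if "q \<in> IJ" for q
    using K that by (intro uniform_limit_bounded_mult_null uniform_limit_ell) (auto elim: eventually_mono)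
  then have "uniform_limit UNIV (\<lambda>l x. \<Sum>q\<in>IJ. l * u l f q * ell q l x) (\<lambda>x. \<Sum>q\<in>IJ. 0) at_top"
    by (intro uniform_limit_sum finite_IJ)
  from uniform_limit_add[OF du.uniform_limit_R[OF assms] this]
  show ?thesis
    by (simp add: R_co_eq distrib_left sum_distrib_left mult.assoc)
qed

lemma feller_R_co: "feller_resolvent Su Rco"
  unfolding feller_resolvent_def
  using R_co_CS R_co_lincomb R_co_resolvent_eq R_co_nonneg R_co_indicator_le
    uniform_limit_on_subset[OF uniform_limit_R_co] by simp

lemma conservative_R_co: "(\<forall>q\<in>IJ. prob_space (p q)) \<Longrightarrow> conservative_resolvent Su Rco"
  unfolding conservative_resolvent_def using R_co_indicator_conservative by blast

end

theorem theorem5: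
  fixes Nn M :: nat
    and S :: "nat \<Rightarrow> 'a::metric_space set"
    and R :: "nat \<Rightarrow> real \<Rightarrow> ('a \<Rightarrow> real) \<Rightarrow> ('a \<Rightarrow> real)"
    and \<kappa> :: "nat \<Rightarrow> nat"
    and \<phi> :: "nat \<Rightarrow> nat \<Rightarrow> 'a \<Rightarrow> real"
    and p :: "nat \<times> nat \<Rightarrow> 'a measure"
  assumes M_bounds: "1 \<le> M" "M \<le> Nn"
    and S_compact: "\<And>i. i \<in> {1..Nn} \<Longrightarrow> compact (S i)"
    and S_disjoint: "\<And>i k. i \<in> {1..Nn} \<Longrightarrow> k \<in> {1..Nn} \<Longrightarrow> i \<noteq> k \<Longrightarrow> S i \<inter> S k = {}"
    and R_feller: "\<And>i. i \<in> {1..Nn} \<Longrightarrow> feller_resolvent (S i) (R i)"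
    and nonconservative: "\<And>i. i \<in> {1..M} \<Longrightarrow> \<not> conservative_resolvent (S i) (R i)"
    and conservative: "\<And>i. i \<in> {M+1..Nn} \<Longrightarrow> conservative_resolvent (S i) (R i)"
    and kernel_trivial: "\<And>i f. i \<in> {1..M} \<Longrightarrow> resolvent_generator (S i) (R i) f (\<lambda>x. 0)
                            \<Longrightarrow> f = (\<lambda>x. 0)"
    and phi_cont: "\<And>i j. i \<in> {1..M} \<Longrightarrow> j \<in> {1..\<kappa> i} \<Longrightarrow> \<phi> i j \<in> CS (S i)"
    and phi_bounds: "\<And>i j x. i \<in> {1..M} \<Longrightarrow> j \<in> {1..\<kappa> i} \<Longrightarrow> x \<in> S i
                       \<Longrightarrow> 0 \<le> \<phi> i j x \<and> \<phi> i j x \<le> 1"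
    and phi_excessive: "\<And>i j l x. i \<in> {1..M} \<Longrightarrow> j \<in> {1..\<kappa> i} \<Longrightarrow> l > 0 \<Longrightarrow> x \<in> S i
                       \<Longrightarrow> l * R i l (\<phi> i j) x \<le> \<phi> i j x"
    and phi_not_invariant: "\<And>i j l. i \<in> {1..M} \<Longrightarrow> j \<in> {1..\<kappa> i} \<Longrightarrow> l > 0
                       \<Longrightarrow> (\<lambda>x. l * R i l (\<phi> i j) x) \<noteq> \<phi> i j"
    and phi_sum: "\<And>i x. i \<in> {1..M} \<Longrightarrow> x \<in> S i \<Longrightarrow> (\<Sum>j\<in>{1..\<kappa> i}. \<phi> i j x) = 1"
    and p_sets: "\<And>q. q \<in> idx_IJ M \<kappa> \<Longrightarrow> sets (p q) = sets (restrict_space borel (S_union Nn S))"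
    and p_subprob: "\<And>q. q \<in> idx_IJ M \<kappa> \<Longrightarrow> subprob_space (p q)"
  shows "feller_resolvent (S_union Nn S) (R_co Nn M \<kappa> S R \<phi> p)
    \<and> ((\<forall>q\<in>idx_IJ M \<kappa>. prob_space (p q))
         \<longrightarrow> conservative_resolvent (S_union Nn S) (R_co Nn M \<kappa> S R \<phi> p))"
proof -
  interpret glued_resolvents Nn S R M \<kappa> \<phi> p
    by (intro glued_resolvents.intro disjoint_union.intro glued_resolvents_axioms.intro)
      (fact M_bounds S_compact S_disjoint R_feller conservative phi_cont phi_excessive phi_sum p_sets p_subprob)+
  show ?thesis
    using feller_R_co conservative_R_co by blast
qed

end
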